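(* Let $N=\{1,\dots,n\}$, let $\tilde Q\in\mathbb{R}^{n\times n}$ be symmetric positive definite, $\tilde d\in\mathbb{R}^n$, and $a,b\in\mathbb{R}^n$ with $b\le a$ componentwise. Let $A,B\subseteq N$ be disjoint, $I=N\setminus(A\cup B)$, and let $(x,s,t)$ be the KKT solution for $(A,B)$. Let $C=\{i: x_i<b_i \text{ or } s_i<0\}$, $D=\{i: x_i>a_i \text{ or } t_i>0\}$, and let $(y,u,v)$ be the KKT solution for $(C,D)$. Define $S=\{i\in A: s_i\ge0\}$, $T=\{i\in B: t_i\le 0\}$, $U=\{i\in I: x_i<b_i\}$, $V=\{i\in I: x_i>a_i\}$, $W=U\cup V$, $\overline W=N\setminus W$, $R=I\setminus W$, $K=\{i\in S\cup T\cup R: y_i<b_i\}$, $L=\{i\in S\cup T\cup R: y_i>a_i\}$ and $z=y-x$. Then for all real $c,d$, $$L_{c,d}(y,u,v)-L_{c,d}(x,s,t)=\tfrac12\big(z_W^{\top}\tilde Q_W z_W-z_{\overline W}^{\top}\tilde Q_{\overline W}z_{\overline W}\big)+\tfrac c2\sum_{i\in K}|y_i-b_i|^2+\tfrac d2\sum_{i\in L}|y_i-a_i|^2-\tfrac c2\sum_{i\in U}|x_i-b_i|^2-\tfrac d2\sum_{i\in V}|x_i-a_i|^2.$$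
   Context: For disjoint $A_1,A_2\subseteq N$, the KKT solution for $(A_1,A_2)$ is the unique triple $(x,s,t)\in(\mathbb{R}^n)^3$ with $x_{A_1}=b_{A_1}$, $x_{A_2}=a_{A_2}$, $s_i=0$ for $i\notin A_1$, $t_i=0$ for $i\notin A_2$, and $\tilde Qx+\tilde d+s+t=0$. The merit function is $L_{c,d}(x,s,t)=\tilde J(x)+\frac c2\|g(x)\|^2+\frac d2\|h(x)\|^2$ with $\tilde J(x)=\tfrac12x^{\top}\tilde Qx+\tilde d^{\top}x$, $g(x)=\max(b-x,0)$, $h(x)=\max(x-a,0)$ componentwise. For $M\subseteq N$, $z_M$ is the subvector of $z$ indexed by $M$ and $\tilde Q_M$ the principal submatrix of $\tilde Q$ indexed by $M$. *)

theory Defs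
  imports "HOL-Analysis.Analysis"
begin

text \<open>Index set N = UNIV of a finite type 'n; vectors are real^'n, matrices real^'n^'n.\<close>

definition sym_pos_def_mat :: "real^'n^'n \<Rightarrow> bool" where
  "sym_pos_def_mat Q \<longleftrightarrow> transpose Q = Q \<and> (\<forall>x. x \<noteq> 0 \<longrightarrow> x \<bullet> (Q *v x) > 0)"

definition kkt_solution ::
  "real^'n^'n \<Rightarrow> real^'n \<Rightarrow> real^'n \<Rightarrow> real^'n \<Rightarrow> 'n set \<Rightarrow> 'n set
     \<Rightarrow> real^'n \<Rightarrow> real^'n \<Rightarrow> real^'n \<Rightarrow> bool" where
  "kkt_solution Q dt a b A1 A2 x s t \<longleftrightarrow>
     (\<forall>i\<in>A1. x $ i = b $ i) \<and> (\<forall>i\<in>A2. x $ i = a $ i) \<and>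
     (\<forall>i. i \<notin> A1 \<longrightarrow> s $ i = 0) \<and> (\<forall>i. i \<notin> A2 \<longrightarrow> t $ i = 0) \<and>
     Q *v x + dt + s + t = 0"

definition Jt :: "real^'n^'n \<Rightarrow> real^'n \<Rightarrow> real^'n \<Rightarrow> real" where
  "Jt Q dt x = (1/2) * (x \<bullet> (Q *v x)) + dt \<bullet> x"

definition gfun :: "real^'n \<Rightarrow> real^'n \<Rightarrow> real^'n" where
  "gfun b x = (\<chi> i. max (b $ i - x $ i) 0)"

definition hfun :: "real^'n \<Rightarrow> real^'n \<Rightarrow> real^'n" where
  "hfun a x = (\<chi> i. max (x $ i - a $ i) 0)"

text \<open>Merit function L_{c,d}(x,s,t) (independent of s,t as in the paper).\<close>
definition merit ::
  "real^'n^'n \<Rightarrow> real^'n \<Rightarrow> real^'n \<Rightarrow> real^'n \<Rightarrow> real \<Rightarrow> real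
     \<Rightarrow> real^'n \<Rightarrow> real^'n \<Rightarrow> real^'n \<Rightarrow> real" where
  "merit Q dt a b c d x s t =
     Jt Q dt x + c/2 * (norm (gfun b x))\<^sup>2 + d/2 * (norm (hfun a x))\<^sup>2"

definition subquad :: "real^'n^'n \<Rightarrow> 'n set \<Rightarrow> real^'n \<Rightarrow> real" where
  "subquad Q M z = (\<Sum>i\<in>M. \<Sum>j\<in>M. z $ i * Q $ i $ j * z $ j)"

end

theory Submission
  imports Defs
begin

text \<open>Split \<open>z = y - x\<close> as \<open>z\<^sub>W + z\<^sub>W\<^sub>b\<^sub>a\<^sub>r\<close>. For symmetric \<open>Q\<close>,
  \<open>J(y) - J(x) = \<nabla>J(x)\<cdot>z\<^sub>W + \<nabla>J(y)\<cdot>z\<^sub>W\<^sub>b\<^sub>a\<^sub>r + (z\<^sub>W\<cdot>Qz\<^sub>W - z\<^sub>W\<^sub>b\<^sub>a\<^sub>r\<cdot>Qz\<^sub>W\<^sub>b\<^sub>a\<^sub>r)/2\<close>,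
  and both first-order terms vanish: \<open>\<nabla>J(x) = -(s + t)\<close> is zero on \<open>I \<supseteq> W\<close>, and
  \<open>\<nabla>J(y) = -(u + v)\<close> is zero wherever \<open>y\<close> moves inside \<open>W\<^sub>b\<^sub>a\<^sub>r\<close>, since a coordinate of
  \<open>W\<^sub>b\<^sub>a\<^sub>r\<close> that is active for \<open>(C, D)\<close> lies in \<open>A \<union> B\<close> and keeps its bound. The penalty
  terms are sums over violated bounds, and a coordinate fixed at a bound by a KKT solution violates
  none; this confines the violations of \<open>x\<close> to \<open>U, V\<close> and those of \<open>y\<close> to \<open>K, L\<close>.\<close>

definition vec_restrict :: "'n set \<Rightarrow> real^'n \<Rightarrow> real^'n" where
  "vec_restrict M z = (\<chi> i. if i \<in> M then z $ i else 0)"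

lemma vec_restrict_add_compl: "vec_restrict M z + vec_restrict (UNIV - M) z = z"
  by (simp add: vec_restrict_def vec_eq_iff)

lemma subquad_eq_inner: "subquad Q M z = vec_restrict M z \<bullet> (Q *v vec_restrict M z)"
proof -
  have "subquad Q M z =
      (\<Sum>i\<in>UNIV. \<Sum>j\<in>UNIV. (if i \<in> M then z $ i else 0) * Q $ i $ j * (if j \<in> M then z $ j else 0))"
    unfolding subquad_def by (simp add: sum.If_cases if_distrib if_distribR Int_absorb1 Int_absorb2)
  then show ?thesis
    by (simp add: vec_restrict_def inner_vec_def matrix_vector_mult_def sum_distrib_left mult.assoc)
qed

lemma inner_symmetric_matrix_commute:
  fixes Q :: "real^'n^'n"
  assumes "transpose Q = Q"
  shows "p \<bullet> (Q *v q) = q \<bullet> (Q *v p)"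
  by (metis assms dot_lmul_matrix inner_commute vector_transpose_matrix)

lemma Jt_diff_split:
  fixes Q :: "real^'n^'n"
  assumes "transpose Q = Q" and "y = x + p + q"
  shows "Jt Q dt y - Jt Q dt x
           = (Q *v x + dt) \<bullet> p + (Q *v y + dt) \<bullet> q + 1/2 * (p \<bullet> (Q *v p) - q \<bullet> (Q *v q))"
  using inner_symmetric_matrix_commute[OF assms(1), of x p] inner_symmetric_matrix_commute[OF assms(1), of x q]
    inner_symmetric_matrix_commute[OF assms(1), of p q]
  unfolding Jt_def assms(2)
  by (simp add: matrix_vector_right_distrib inner_add_left inner_add_right inner_commute algebra_simps)

lemma merit_diff_split:
  fixes Q :: "real^'n^'n"
  assumes "transpose Q = Q"
    and "Q *v x + dt + s + t = 0" and "Q *v y + dt + u + v = 0"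
    and "(s + t) \<bullet> vec_restrict W (y - x) = 0"
    and "(u + v) \<bullet> vec_restrict (UNIV - W) (y - x) = 0"
  shows "merit Q dt a b c d y u v - merit Q dt a b c d x s t =
           1/2 * (subquad Q W (y - x) - subquad Q (UNIV - W) (y - x))
           + c/2 * ((norm (gfun b y))\<^sup>2 - (norm (gfun b x))\<^sup>2)
           + d/2 * ((norm (hfun a y))\<^sup>2 - (norm (hfun a x))\<^sup>2)"
proof -
  define p where "p = vec_restrict W (y - x)"
  define q where "q = vec_restrict (UNIV - W) (y - x)"
  have split: "y = x + p + q"
    using vec_restrict_add_compl[of W "y - x"] by (simp add: p_def q_def algebra_simps)
  have grad_x: "Q *v x + dt = - (s + t)" and grad_y: "Q *v y + dt = - (u + v)"
    using assms(2,3) by (simp_all only: eq_neg_iff_add_eq_0 add.assoc)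
  have orth_p: "(s + t) \<bullet> p = 0" and orth_q: "(u + v) \<bullet> q = 0"
    using assms(4,5) by (simp_all add: p_def q_def)
  have "Jt Q dt y - Jt Q dt x
      = (Q *v x + dt) \<bullet> p + (Q *v y + dt) \<bullet> q + 1/2 * (p \<bullet> (Q *v p) - q \<bullet> (Q *v q))"
    by (rule Jt_diff_split[OF assms(1) split])
  then have "Jt Q dt y - Jt Q dt x = 1/2 * (p \<bullet> (Q *v p) - q \<bullet> (Q *v q))"
    unfolding grad_x grad_y inner_minus_left orth_p orth_q by simp
  then show ?thesis
    unfolding merit_def p_def q_def subquad_eq_inner by (simp add: algebra_simps)
qed

lemma power2_norm_vec: "(norm (v::real^'n))\<^sup>2 = (\<Sum>i\<in>UNIV. (v $ i)\<^sup>2)"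
  by (simp only: power2_norm_eq_inner) (simp add: inner_vec_def power2_eq_square)

lemma power2_norm_gfun: "(norm (gfun b x))\<^sup>2 = (\<Sum>i\<in>{i. x $ i < b $ i}. \<bar>x $ i - b $ i\<bar>\<^sup>2)"
  unfolding power2_norm_vec gfun_def
  by (simp add: max_def if_distrib[of "\<lambda>r. r\<^sup>2"] sum.If_cases Collect_neg_eq[symmetric] not_le power2_commute)

lemma power2_norm_hfun: "(norm (hfun a x))\<^sup>2 = (\<Sum>i\<in>{i. a $ i < x $ i}. \<bar>x $ i - a $ i\<bar>\<^sup>2)"
  unfolding power2_norm_vec hfun_def
  by (simp add: max_def if_distrib[of "\<lambda>r. r\<^sup>2"] sum.If_cases Collect_neg_eq[symmetric] not_le)

lemma kkt_active_within_bounds: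
  assumes "kkt_solution Q dt a b A1 A2 x s t" and "\<forall>i. b $ i \<le> a $ i" and "i \<in> A1 \<union> A2"
  shows "b $ i \<le> x $ i \<and> x $ i \<le> a $ i"
  using assms by (auto simp: kkt_solution_def)

lemma kkt_multipliers_orthogonal:
  assumes "kkt_solution Q dt a b A1 A2 x s t" and "\<forall>i\<in>A1 \<union> A2. w $ i = 0"
  shows "(s + t) \<bullet> w = 0"
  unfolding inner_vec_def
proof (rule sum.neutral, intro ballI)
  fix i
  show "(s + t) $ i \<bullet> w $ i = 0"
    using assms by (cases "i \<in> A1 \<union> A2") (auto simp: kkt_solution_def)
qed

lemma kkt_successor_agrees_where_feasible:
  assumes "kkt_solution Q dt a b A B x s t"
    and "kkt_solution Q dt a b {i. x $ i < b $ i \<or> s $ i < 0} {i. x $ i > a $ i \<or> t $ i > 0} y u v"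
    and "b $ i \<le> x $ i" "x $ i \<le> a $ i" and "s $ i < 0 \<or> t $ i > 0"
  shows "y $ i = x $ i"
  using assms by (cases "i \<in> A"; cases "i \<in> B") (auto simp: kkt_solution_def)

lemma kkt_successor_multipliers_orthogonal:
  assumes "\<forall>i. b $ i \<le> a $ i"
    and "kkt_solution Q dt a b A B x s t"
    and "kkt_solution Q dt a b {i. x $ i < b $ i \<or> s $ i < 0} {i. x $ i > a $ i \<or> t $ i > 0} y u v"
  shows "(u + v) \<bullet> vec_restrict
           (UNIV - ({i\<in>UNIV - (A \<union> B). x $ i < b $ i} \<union> {i\<in>UNIV - (A \<union> B). x $ i > a $ i})) (y - x) = 0"
proof (rule kkt_multipliers_orthogonal[OF assms(3)], intro ballI)
  fix i assume "i \<in> {i. x $ i < b $ i \<or> s $ i < 0} \<union> {i. x $ i > a $ i \<or> t $ i > 0}"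
  then show "vec_restrict (UNIV - ({i\<in>UNIV - (A \<union> B). x $ i < b $ i} \<union>
      {i\<in>UNIV - (A \<union> B). x $ i > a $ i})) (y - x) $ i = 0"
    using kkt_active_within_bounds[OF assms(2,1), of i] kkt_successor_agrees_where_feasible[OF assms(2,3), of i]
    by (auto simp: vec_restrict_def)
qed

theorem mainTheorem3:
  fixes Q :: "real^'n^'n" and dt a b x s t y u v :: "real^'n"
    and A B :: "'n set" and c d :: real
  assumes "sym_pos_def_mat Q"
    and "\<forall>i. b $ i \<le> a $ i"
    and "A \<inter> B = {}"
    and "kkt_solution Q dt a b A B x s t"
    and "kkt_solution Q dt a b
           {i. x $ i < b $ i \<or> s $ i < 0} {i. x $ i > a $ i \<or> t $ i > 0} y u v"
  shows
    "let I = UNIV - (A \<union> B);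
         S = {i\<in>A. s $ i \<ge> 0};
         T = {i\<in>B. t $ i \<le> 0};
         U = {i\<in>I. x $ i < b $ i};
         V = {i\<in>I. x $ i > a $ i};
         W = U \<union> V;
         Wbar = UNIV - W;
         R = I - W;
         K = {i\<in>S \<union> T \<union> R. y $ i < b $ i};
         L = {i\<in>S \<union> T \<union> R. y $ i > a $ i};
         z = y - x
     in merit Q dt a b c d y u v - merit Q dt a b c d x s t =
        (1/2) * (subquad Q W z - subquad Q Wbar z)
        + c/2 * (\<Sum>i\<in>K. \<bar>y $ i - b $ i\<bar>\<^sup>2)
        + d/2 * (\<Sum>i\<in>L. \<bar>y $ i - a $ i\<bar>\<^sup>2)
        - c/2 * (\<Sum>i\<in>U. \<bar>x $ i - b $ i\<bar>\<^sup>2)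
        - d/2 * (\<Sum>i\<in>V. \<bar>x $ i - a $ i\<bar>\<^sup>2)"
proof -
  define I where "I = UNIV - (A \<union> B)"
  define W where "W = {i\<in>I. x $ i < b $ i} \<union> {i\<in>I. x $ i > a $ i}"
  define M where "M = {i\<in>A. s $ i \<ge> 0} \<union> {i\<in>B. t $ i \<le> 0} \<union> (I - W)"
  note x_bounds = kkt_active_within_bounds[OF assms(4,2)]
  note y_bounds = kkt_active_within_bounds[OF assms(5,2)]
  have orth_W: "(s + t) \<bullet> vec_restrict W (y - x) = 0"
    by (rule kkt_multipliers_orthogonal[OF assms(4)]) (auto simp: W_def I_def vec_restrict_def)
  have orth_Wbar: "(u + v) \<bullet> vec_restrict (UNIV - W) (y - x) = 0"
    using kkt_successor_multipliers_orthogonal[OF assms(2,4,5)] unfolding W_def I_def .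
  have "i \<in> I" if "x $ i < b $ i \<or> x $ i > a $ i" for i
    using that x_bounds[of i] by (auto simp: I_def)
  then have lower_x: "{i. x $ i < b $ i} = {i\<in>I. x $ i < b $ i}"
    and upper_x: "{i. a $ i < x $ i} = {i\<in>I. x $ i > a $ i}" by blast+
  have "i \<in> M" if "y $ i < b $ i \<or> y $ i > a $ i" for i
    using that y_bounds[of i] by (auto simp: M_def W_def I_def)
  then have lower_y: "{i. y $ i < b $ i} = {i\<in>M. y $ i < b $ i}"
    and upper_y: "{i. a $ i < y $ i} = {i\<in>M. y $ i > a $ i}" by blast+
  have symQ: "transpose Q = Q"
    using assms(1) by (simp add: sym_pos_def_mat_def)
  have grad_x: "Q *v x + dt + s + t = 0" and grad_y: "Q *v y + dt + u + v = 0"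
    using assms(4,5) by (simp_all add: kkt_solution_def)
  show ?thesis
    using merit_diff_split[OF symQ grad_x grad_y orth_W orth_Wbar, where a = a and b = b and c = c and d = d]
    unfolding Let_def I_def[symmetric] W_def[symmetric] M_def[symmetric]
      power2_norm_gfun power2_norm_hfun lower_x upper_x lower_y upper_y
    by argo
qed

end
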